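(* If $(S,K,I)$ is a split graph, then the factor graph $\Phi(S)$ cannot contain an induced path $v_1v_2v_3v_4$ with $\sigma_{23}=1$ and $d_1\geq d_2\leq d_4$.
   Context: A split graph $(S,K,I)$ is a graph $S$ together with a fixed partition $V(S)=K\dot\cup I$, where $K$ is a clique and $I$ is an independent set. For a vertex $v_i$ of $S$, $N_i$ denotes its open neighborhood in $S$ and $d_i=|N_i|$; $\eta_{uv}=|N_u\cap N_v|$. The factor graph $\Phi(S)$ is the loopless multigraph with vertex set $I$ in which, for distinct $u,v\in I$, there is one edge joining $u$ and $v$ for each 2-switch of $S$ acting on $u$ and $v$ (a 2-switch replaces edges $ab,cd$ with $ac,bd$ when $ab,cd\in E(S)$ and $ac,bd\notin E(S)$); equivalently, the multiplicity of $uv$ is $\sigma_{uv}=(d_u-\eta_{uv})(d_v-\eta_{uv})$, and $u,v$ are adjacent iff $\sigma_{uv}>0$; $\sigma_{ij}$ denotes $\sigma_{v_iv_j}$. An induced path in $\Phi(S)$ consists of distinct vertices with consecutive ones adjacent and no other pair adjacent (multiplicities ignored). *)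

theory Defs
  imports Main
begin

definition simple_graph :: "'a set \<Rightarrow> ('a \<Rightarrow> 'a \<Rightarrow> bool) \<Rightarrow> bool" where
  "simple_graph V E \<longleftrightarrow> finite V \<and> (\<forall>u v. E u v \<longrightarrow> u \<in> V \<and> v \<in> V)
     \<and> (\<forall>u v. E u v \<longrightarrow> E v u) \<and> (\<forall>v. \<not> E v v)"

definition split_graph :: "'a set \<Rightarrow> ('a \<Rightarrow> 'a \<Rightarrow> bool) \<Rightarrow> 'a set \<Rightarrow> 'a set \<Rightarrow> bool" where
  "split_graph V E K I \<longleftrightarrow> simple_graph V E \<and> K \<union> I = V \<and> K \<inter> I = {}
     \<and> (\<forall>u\<in>K. \<forall>v\<in>K. u \<noteq> v \<longrightarrow> E u v)
     \<and> (\<forall>u\<in>I. \<forall>v\<in>I. \<not> E u v)"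

definition nbhd :: "'a set \<Rightarrow> ('a \<Rightarrow> 'a \<Rightarrow> bool) \<Rightarrow> 'a \<Rightarrow> 'a set" where
  "nbhd V E v = {u \<in> V. E v u}"

definition deg :: "'a set \<Rightarrow> ('a \<Rightarrow> 'a \<Rightarrow> bool) \<Rightarrow> 'a \<Rightarrow> nat" where
  "deg V E v = card (nbhd V E v)"

definition eta :: "'a set \<Rightarrow> ('a \<Rightarrow> 'a \<Rightarrow> bool) \<Rightarrow> 'a \<Rightarrow> 'a \<Rightarrow> nat" where
  "eta V E u v = card (nbhd V E u \<inter> nbhd V E v)"

(* multiplicity of the edge uv in the factor graph: sigma_uv = (d_u - eta_uv)(d_v - eta_uv) *)
definition sigma :: "'a set \<Rightarrow> ('a \<Rightarrow> 'a \<Rightarrow> bool) \<Rightarrow> 'a \<Rightarrow> 'a \<Rightarrow> nat" where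
  "sigma V E u v = (deg V E u - eta V E u v) * (deg V E v - eta V E u v)"

definition factor_adj :: "'a set \<Rightarrow> ('a \<Rightarrow> 'a \<Rightarrow> bool) \<Rightarrow> 'a set \<Rightarrow> 'a \<Rightarrow> 'a \<Rightarrow> bool" where
  "factor_adj V E I u v \<longleftrightarrow> u \<in> I \<and> v \<in> I \<and> u \<noteq> v \<and> sigma V E u v > 0"

definition factor_induced_P4 :: "'a set \<Rightarrow> ('a \<Rightarrow> 'a \<Rightarrow> bool) \<Rightarrow> 'a set \<Rightarrow> 'a \<Rightarrow> 'a \<Rightarrow> 'a \<Rightarrow> 'a \<Rightarrow> bool" where
  "factor_induced_P4 V E I v1 v2 v3 v4 \<longleftrightarrow>
     v1 \<in> I \<and> v2 \<in> I \<and> v3 \<in> I \<and> v4 \<in> I \<and> distinct [v1, v2, v3, v4]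
     \<and> factor_adj V E I v1 v2 \<and> factor_adj V E I v2 v3 \<and> factor_adj V E I v3 v4
     \<and> \<not> factor_adj V E I v1 v3 \<and> \<not> factor_adj V E I v1 v4 \<and> \<not> factor_adj V E I v2 v4"

end

theory Submission
  imports Defs
begin

text \<open>Since \<open>\<sigma>\<^sub>u\<^sub>v = |N\<^sub>u - N\<^sub>v| |N\<^sub>v - N\<^sub>u|\<close>, two vertices are adjacent in the factor
  graph exactly when their neighbourhoods are not nested, and \<open>\<sigma>\<^sub>2\<^sub>3 = 1\<close> says that
  \<open>N\<^sub>2\<close> and \<open>N\<^sub>3\<close> have the same size and differ in one element each, say \<open>N\<^sub>3 - N\<^sub>2 = {b}\<close>.
  A set nested with a set that is at least as large is contained in it, so the degree
  conditions give \<open>N\<^sub>3 \<subseteq> N\<^sub>1\<close> and \<open>N\<^sub>2 \<subseteq> N\<^sub>4\<close>. As \<open>N\<^sub>3 \<subseteq> N\<^sub>2 \<union> {b}\<close> is not contained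
  in \<open>N\<^sub>4\<close>, we get \<open>b \<notin> N\<^sub>4\<close> while \<open>b \<in> N\<^sub>1\<close>; hence \<open>N\<^sub>4 \<subseteq> N\<^sub>1\<close>, and then
  \<open>N\<^sub>2 \<subseteq> N\<^sub>4 \<subseteq> N\<^sub>1\<close> contradicts the adjacency of \<open>v\<^sub>1\<close> and \<open>v\<^sub>2\<close>.\<close>

definition nested :: "'a set \<Rightarrow> 'a set \<Rightarrow> bool" where
  "nested A B \<longleftrightarrow> A \<subseteq> B \<or> B \<subseteq> A"

lemma nested_card_le_imp_subset:
  assumes "finite A" and "nested A B" and "card A \<le> card B"
  shows "A \<subseteq> B"
  using assms card_seteq[of A B] unfolding nested_def by blast

lemma card_eq_if_card_Diff_eq:
  assumes "finite A" and "finite B" and "card (A - B) = card (B - A)"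
  shows "card A = card B"
  using assms card_Int_Diff[of A B] card_Int_Diff[of B A] by (simp add: Int_commute)

lemma no_incomparability_P4:
  assumes fin: "finite N\<^sub>2" "finite N\<^sub>3"
    and not_nested: "\<not> nested N\<^sub>1 N\<^sub>2" "\<not> nested N\<^sub>2 N\<^sub>3" "\<not> nested N\<^sub>3 N\<^sub>4"
    and nested: "nested N\<^sub>3 N\<^sub>1" "nested N\<^sub>1 N\<^sub>4" "nested N\<^sub>2 N\<^sub>4"
    and one_diff: "card (N\<^sub>2 - N\<^sub>3) = 1" "card (N\<^sub>3 - N\<^sub>2) = 1"
    and card_le: "card N\<^sub>2 \<le> card N\<^sub>1" "card N\<^sub>2 \<le> card N\<^sub>4"
  shows False
proof -
  obtain b where b: "N\<^sub>3 - N\<^sub>2 = {b}"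
    using one_diff(2) card_1_singletonE by blast
  have "card N\<^sub>3 = card N\<^sub>2"
    using card_eq_if_card_Diff_eq[OF fin(2,1)] one_diff by simp
  then have "N\<^sub>3 \<subseteq> N\<^sub>1"
    using nested_card_le_imp_subset[OF fin(2) nested(1)] card_le(1) by simp
  then have "b \<in> N\<^sub>1"
    using b by blast
  have "N\<^sub>2 \<subseteq> N\<^sub>4"
    using nested_card_le_imp_subset[OF fin(1) nested(3) card_le(2)] .
  moreover have "\<not> N\<^sub>3 \<subseteq> N\<^sub>4"
    using not_nested(3) unfolding nested_def by blast
  moreover have "N\<^sub>3 \<subseteq> insert b N\<^sub>2"
    using b by blast
  ultimately have "b \<notin> N\<^sub>4"
    by blast
  then have "N\<^sub>4 \<subseteq> N\<^sub>1"
    using nested(2) \<open>b \<in> N\<^sub>1\<close> unfolding nested_def by blast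
  then show False
    using \<open>N\<^sub>2 \<subseteq> N\<^sub>4\<close> not_nested(1) unfolding nested_def by blast
qed

lemma finite_nbhd: "finite V \<Longrightarrow> finite (nbhd V E v)"
  unfolding nbhd_def by simp

lemma sigma_eq_card_Diff:
  assumes "finite V"
  shows "sigma V E u v = card (nbhd V E u - nbhd V E v) * card (nbhd V E v - nbhd V E u)"
  using finite_nbhd[OF assms] unfolding sigma_def deg_def eta_def
  by (simp add: card_Diff_subset_Int Int_commute)

lemma factor_adj_iff_not_nested:
  assumes "finite V" and "u \<in> I" and "v \<in> I" and "u \<noteq> v"
  shows "factor_adj V E I u v \<longleftrightarrow> \<not> nested (nbhd V E u) (nbhd V E v)"
  using assms finite_nbhd[OF assms(1)]
  unfolding factor_adj_def sigma_eq_card_Diff[OF assms(1)] nested_def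
  by (simp add: card_gt_0_iff)

theorem lemma4p3:
  fixes V K I :: "'a set" and E :: "'a \<Rightarrow> 'a \<Rightarrow> bool" and v1 v2 v3 v4 :: 'a
  assumes "split_graph V E K I"
  shows "\<not> (factor_induced_P4 V E I v1 v2 v3 v4 \<and> sigma V E v2 v3 = 1
             \<and> deg V E v1 \<ge> deg V E v2 \<and> deg V E v2 \<le> deg V E v4)"
proof
  assume H: "factor_induced_P4 V E I v1 v2 v3 v4 \<and> sigma V E v2 v3 = 1
             \<and> deg V E v1 \<ge> deg V E v2 \<and> deg V E v2 \<le> deg V E v4"
  let ?N = "nbhd V E"
  have "finite V"
    using assms unfolding split_graph_def simple_graph_def by blast
  have adj: "factor_adj V E I u v \<longleftrightarrow> \<not> nested (?N u) (?N v)"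
    if "u \<in> {v1, v2, v3, v4}" "v \<in> {v1, v2, v3, v4}" "u \<noteq> v" for u v
    using factor_adj_iff_not_nested[OF \<open>finite V\<close>] H that
    unfolding factor_induced_P4_def by blast
  have "\<not> nested (?N v1) (?N v2)" "\<not> nested (?N v2) (?N v3)" "\<not> nested (?N v3) (?N v4)"
    and "nested (?N v3) (?N v1)" "nested (?N v1) (?N v4)" "nested (?N v2) (?N v4)"
    using H adj unfolding factor_induced_P4_def by (auto simp: nested_def)
  moreover have "card (?N v2 - ?N v3) = 1" "card (?N v3 - ?N v2) = 1"
    using H sigma_eq_card_Diff[OF \<open>finite V\<close>] by simp_all
  ultimately show False
    using no_incomparability_P4 finite_nbhd[OF \<open>finite V\<close>] H unfolding deg_def by blast
qed

end
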